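(* Let $G$ be a connected graph with vertices $v_1,\dots,v_n$, and let $k_1,k$ be nonnegative integers. Then \[ \sum_{i=1}^{n} dav(G-v_i,k_1,k,k)=(n-2-k_1-2k)\,dav(G,k_1,k,k)+(k_1+1)\,dav(G,k_1+1,k,k)+(k+1)\,dav(G,k_1,k,k+1). \]
   Context: All graphs are finite, simple and undirected. $G-v$ denotes the graph obtained from $G$ by deleting vertex $v$ and its incident edges. For a graph $F$ and nonnegative integers $k_1,k_2,k_3$, $dav(F,k_1,k_2,k_3)$ denotes the number of pairs of adjacent vertices $x$ and $y$ in $F$ such that exactly $k_1$ vertices are adjacent to both $x$ and $y$, exactly $k_2$ vertices other than $y$ are adjacent to $x$ but not to $y$, and exactly $k_3$ vertices other than $x$ are adjacent to $y$ but not to $x$. *)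

theory Defs
  imports Main
begin

definition simple_graph :: "'a set \<Rightarrow> ('a \<Rightarrow> 'a \<Rightarrow> bool) \<Rightarrow> bool" where
  "simple_graph V E \<longleftrightarrow> finite V \<and> (\<forall>x y. E x y \<longrightarrow> x \<in> V \<and> y \<in> V)
     \<and> (\<forall>x y. E x y \<longrightarrow> E y x) \<and> (\<forall>x. \<not> E x x)"

definition connected_graph :: "'a set \<Rightarrow> ('a \<Rightarrow> 'a \<Rightarrow> bool) \<Rightarrow> bool" where
  "connected_graph V E \<longleftrightarrow> V \<noteq> {} \<and> (\<forall>x\<in>V. \<forall>y\<in>V. E\<^sup>*\<^sup>* x y)"

definition nbhd :: "'a set \<Rightarrow> ('a \<Rightarrow> 'a \<Rightarrow> bool) \<Rightarrow> 'a \<Rightarrow> 'a set" where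
  "nbhd V E x = {z \<in> V. E x z}"

definition del_vertex_V :: "'a set \<Rightarrow> 'a \<Rightarrow> 'a set" where
  "del_vertex_V V v = V - {v}"

definition del_vertex_E :: "('a \<Rightarrow> 'a \<Rightarrow> bool) \<Rightarrow> 'a \<Rightarrow> 'a \<Rightarrow> 'a \<Rightarrow> bool" where
  "del_vertex_E E v = (\<lambda>a b. E a b \<and> a \<noteq> v \<and> b \<noteq> v)"

definition dav :: "'a set \<Rightarrow> ('a \<Rightarrow> 'a \<Rightarrow> bool) \<Rightarrow> nat \<Rightarrow> nat \<Rightarrow> nat \<Rightarrow> nat" where
  "dav V E k1 k2 k3 = card {{x, y} | x y. x \<in> V \<and> y \<in> V \<and> E x y
      \<and> card (nbhd V E x \<inter> nbhd V E y) = k1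
      \<and> card (nbhd V E x - nbhd V E y - {y}) = k2
      \<and> card (nbhd V E y - nbhd V E x - {x}) = k3}"

end

theory Submission
  imports Defs
begin

text \<open>Double counting over pairs (edge, deleted vertex). Give an edge xy the type (a, b, c),
where a, b, c are the numbers of common, x-private and y-private neighbours. Deleting a vertex
v outside {x, y} lowers exactly one of a, b, c by one if v lies in the corresponding
neighbourhood and keeps the type otherwise, while deleting x or y destroys the edge. Summing
over v and regrouping the edges by their type in G gives the identity.\<close>

definition edge_type :: "'a set \<Rightarrow> ('a \<Rightarrow> 'a \<Rightarrow> bool) \<Rightarrow> 'a \<Rightarrow> 'a \<Rightarrow> nat \<times> nat \<times> nat" where
  "edge_type V E x y = (card (nbhd V E x \<inter> nbhd V E y), card (nbhd V E x - nbhd V E y - {y}),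
     card (nbhd V E y - nbhd V E x - {x}))"

definition edges :: "('a \<Rightarrow> 'a \<Rightarrow> bool) \<Rightarrow> 'a set set" where
  "edges E = {{x, y} | x y. E x y}"

definition has_edge_type ::
    "'a set \<Rightarrow> ('a \<Rightarrow> 'a \<Rightarrow> bool) \<Rightarrow> nat \<times> nat \<times> nat \<Rightarrow> 'a set \<Rightarrow> bool" where "has_edge_type V E t e \<longleftrightarrow> (\<exists>x y. e = {x, y} \<and> E x y \<and> edge_type V E x y = t)"

lemma finite_edges:
  assumes "simple_graph V E"
  shows "finite (edges E)"
proof -
  have "edges E \<subseteq> Pow V"
    using assms unfolding edges_def simple_graph_def by auto
  then show ?thesis
    using assms unfolding simple_graph_def by (meson finite_Pow_iff finite_subset)
qed

lemma dav_eq_sum_has_edge_type: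
  assumes "simple_graph V E" "finite F" "edges E \<subseteq> F"
  shows "int (dav V E k1 k2 k3) = (\<Sum>e\<in>F. of_bool (has_edge_type V E (k1, k2, k3) e))"
proof -
  have "dav V E k1 k2 k3 = card (F \<inter> {e. has_edge_type V E (k1, k2, k3) e})"
    unfolding dav_def using assms(1,3)
    unfolding simple_graph_def edges_def has_edge_type_def edge_type_def
    by (intro arg_cong[where f = card]) blast
  then show ?thesis
    using assms(2) by simp
qed

lemma edge_type_swap: "edge_type V E y x = (a, c, b) \<longleftrightarrow> edge_type V E x y = (a, b, c)"
  unfolding edge_type_def by (auto simp: Int_commute)

lemma has_edge_type_doubleton:
  assumes "simple_graph V E" "E x y"
  shows "has_edge_type V E (a, b, c) {x, y}
    \<longleftrightarrow> edge_type V E x y = (a, b, c) \<or> edge_type V E x y = (a, c, b)"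
proof -
  have "E y x"
    using assms unfolding simple_graph_def by blast
  then show ?thesis
    using assms(2) edge_type_swap[of V E x y a b c] edge_type_swap[of V E x y a c b]
    unfolding has_edge_type_def doubleton_eq_iff by blast
qed

lemma simple_graph_del_vertex:
  assumes "simple_graph V E"
  shows "simple_graph (del_vertex_V V v) (del_vertex_E E v)"
  using assms unfolding simple_graph_def del_vertex_V_def del_vertex_E_def by auto

lemma edges_del_vertex_subset: "edges (del_vertex_E E v) \<subseteq> edges E"
  unfolding edges_def del_vertex_E_def by auto

lemma has_edge_type_del_vertex_notin:
  "has_edge_type (del_vertex_V V v) (del_vertex_E E v) t e \<Longrightarrow> v \<notin> e"
  unfolding has_edge_type_def del_vertex_E_def by auto

lemma edge_type_del_vertex:
  assumes "v \<noteq> x" "v \<noteq> y"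
  shows "edge_type (del_vertex_V V v) (del_vertex_E E v) x y =
    (card (nbhd V E x \<inter> nbhd V E y - {v}), card (nbhd V E x - nbhd V E y - {y} - {v}),
     card (nbhd V E y - nbhd V E x - {x} - {v}))"
proof -
  have nbhd_del: "nbhd (del_vertex_V V v) (del_vertex_E E v) z = nbhd V E z - {v}"
    if "z \<noteq> v" for z
    using that unfolding nbhd_def del_vertex_V_def del_vertex_E_def by auto
  have "(nbhd V E x - {v}) \<inter> (nbhd V E y - {v}) = nbhd V E x \<inter> nbhd V E y - {v}"
    "nbhd V E x - {v} - (nbhd V E y - {v}) - {y} = nbhd V E x - nbhd V E y - {y} - {v}"
    "nbhd V E y - {v} - (nbhd V E x - {v}) - {x} = nbhd V E y - nbhd V E x - {x} - {v}"
    by auto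
  then show ?thesis
    using assms unfolding edge_type_def by (simp add: nbhd_del)
qed

lemma sum_card_Diff_singleton_disjoint:
  fixes f :: "nat \<times> nat \<times> nat \<Rightarrow> 'b::comm_ring_1"
  assumes "finite W" "A \<subseteq> W" "B \<subseteq> W" "C \<subseteq> W"
    and "A \<inter> B = {}" "A \<inter> C = {}" "B \<inter> C = {}"
  shows "(\<Sum>v\<in>W. f (card (A - {v}), card (B - {v}), card (C - {v})))
    = of_nat (card A) * f (card A - 1, card B, card C)
      + of_nat (card B) * f (card A, card B - 1, card C)
      + of_nat (card C) * f (card A, card B, card C - 1)
      + (of_nat (card W) - of_nat (card A) - of_nat (card B) - of_nat (card C))
        * f (card A, card B, card C)"
proof -
  have fin: "finite A" "finite B" "finite C"
    using assms(1-4) finite_subset by blast+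
  have disj: "\<And>v. v \<in> A \<Longrightarrow> v \<notin> B \<and> v \<notin> C" "\<And>v. v \<in> B \<Longrightarrow> v \<notin> A \<and> v \<notin> C"
    "\<And>v. v \<in> C \<Longrightarrow> v \<notin> A \<and> v \<notin> B"
    using assms(5-7) by blast+
  have split: "sum g W = sum g (W - A - B - C) + sum g C + sum g B + sum g A"
    for g :: "'a \<Rightarrow> 'b"
  proof -
    have "sum g W = sum g (W - A) + sum g A"
      using assms by (intro sum.subset_diff) auto
    also have "sum g (W - A) = sum g (W - A - B) + sum g B"
      using assms by (intro sum.subset_diff) auto
    also have "sum g (W - A - B) = sum g (W - A - B - C) + sum g C"
      using assms by (intro sum.subset_diff) auto
    finally show ?thesis .
  qed
  define g where "g v = f (card (A - {v}), card (B - {v}), card (C - {v}))" for v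
  have "sum g A = (\<Sum>v\<in>A. f (card A - 1, card B, card C))"
    using disj(1) fin by (intro sum.cong refl) (simp add: g_def)
  moreover have "sum g B = (\<Sum>v\<in>B. f (card A, card B - 1, card C))"
    using disj(2) fin by (intro sum.cong refl) (simp add: g_def)
  moreover have "sum g C = (\<Sum>v\<in>C. f (card A, card B, card C - 1))"
    using disj(3) fin by (intro sum.cong refl) (simp add: g_def)
  moreover have "sum g (W - A - B - C) = (\<Sum>v\<in>W - A - B - C. f (card A, card B, card C))"
    by (intro sum.cong refl) (auto simp: g_def)
  moreover have "(of_nat (card (W - A - B - C)) :: 'b)
      = of_nat (card W) - of_nat (card A) - of_nat (card B) - of_nat (card C)"
    using split[of "\<lambda>_. 1"] by (simp add: algebra_simps)
  ultimately have "sum g W = of_nat (card A) * f (card A - 1, card B, card C)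
      + of_nat (card B) * f (card A, card B - 1, card C)
      + of_nat (card C) * f (card A, card B, card C - 1)
      + (of_nat (card W) - of_nat (card A) - of_nat (card B) - of_nat (card C))
        * f (card A, card B, card C)"
    using split[of g] by (simp add: algebra_simps)
  then show ?thesis
    unfolding g_def .
qed

lemma sum_edge_type_del_vertex:
  fixes f :: "nat \<times> nat \<times> nat \<Rightarrow> 'b::comm_ring_1"
  assumes "simple_graph V E" "E x y" "edge_type V E x y = (a, b, c)"
  shows "(\<Sum>v\<in>V - {x, y}. f (edge_type (del_vertex_V V v) (del_vertex_E E v) x y))
    = of_nat a * f (a - 1, b, c) + of_nat b * f (a, b - 1, c) + of_nat c * f (a, b, c - 1)
      + (of_nat (card V) - 2 - of_nat a - of_nat b - of_nat c) * f (a, b, c)"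
proof -
  define N where "N = nbhd V E"
  have in_V: "x \<in> V" "y \<in> V" "x \<noteq> y" "finite V"
    using assms(1,2) unfolding simple_graph_def by metis+
  have "N z \<subseteq> V - {z}" for z
    using assms(1) unfolding N_def nbhd_def simple_graph_def by auto
  then have subsets: "N x \<inter> N y \<subseteq> V - {x, y}" "N x - N y - {y} \<subseteq> V - {x, y}"
    "N y - N x - {x} \<subseteq> V - {x, y}"
    by blast+
  have "card V = card (V - {x, y}) + 2"
    using in_V by (subst card_Diff_subset) (auto dest: card_mono[of V "{x, y}"])
  then have "(of_nat (card (V - {x, y})) :: 'b) = of_nat (card V) - 2"
    by simp
  moreover have "(\<Sum>v\<in>V - {x, y}. f (edge_type (del_vertex_V V v) (del_vertex_E E v) x y))
    = (\<Sum>v\<in>V - {x, y}. f (card (N x \<inter> N y - {v}), card (N x - N y - {y} - {v}),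
                          card (N y - N x - {x} - {v})))"
    unfolding N_def by (intro sum.cong refl) (auto simp: edge_type_del_vertex)
  moreover have "card (N x \<inter> N y) = a" "card (N x - N y - {y}) = b" "card (N y - N x - {x}) = c"
    using assms(3) unfolding N_def edge_type_def by simp_all
  ultimately show ?thesis
    using sum_card_Diff_singleton_disjoint[OF _ subsets, of f] in_V by auto
qed

text \<open>The truncated differences a - 1, b - 1, c - 1 are harmless: each occurs with the
factor a, b or c respectively.\<close>

lemma edge_type_count_identity:
  fixes n :: int and a b c k1 k :: nat
  shows "int a * of_bool ((a - 1, b, c) = (k1, k, k))
      + int b * of_bool ((a, b - 1, c) = (k1, k, k)) + int c * of_bool ((a, b, c - 1) = (k1, k, k))
      + (n - 2 - int a - int b - int c) * of_bool ((a, b, c) = (k1, k, k))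
    = (n - 2 - int k1 - 2 * int k) * of_bool ((a, b, c) = (k1, k, k))
      + (int k1 + 1) * of_bool ((a, b, c) = (k1 + 1, k, k))
      + (int k + 1) * of_bool ((a, b, c) = (k1, k, k + 1) \<or> (a, b, c) = (k1, k + 1, k))"
  by (cases "a = k1 + 1"; cases "a = k1"; cases "b = k"; cases "b = k + 1"; cases "c = k";
      cases "c = k + 1"; auto)


lemma sum_has_edge_type_del_vertex:
  assumes "simple_graph V E" "E x y"
  shows "(\<Sum>v\<in>V.
        of_bool (has_edge_type (del_vertex_V V v) (del_vertex_E E v) (k1, k, k) {x, y}))
    = (int (card V) - 2 - int k1 - 2 * int k) * of_bool (has_edge_type V E (k1, k, k) {x, y})
      + (int k1 + 1) * of_bool (has_edge_type V E (k1 + 1, k, k) {x, y})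
      + (int k + 1) * of_bool (has_edge_type V E (k1, k, k + 1) {x, y})"
proof -
  obtain a b c where abc: "edge_type V E x y = (a, b, c)"
    by (metis prod_cases3)
  have "finite V"
    using assms(1) unfolding simple_graph_def by blast
  have del_edge: "del_vertex_E E v x y" if "v \<notin> {x, y}" for v
    using assms(2) that unfolding del_vertex_E_def by auto
  have "(\<Sum>v\<in>V. of_bool (has_edge_type (del_vertex_V V v) (del_vertex_E E v) (k1, k, k) {x, y}))
      = (\<Sum>v\<in>V - {x, y}.
           of_bool (edge_type (del_vertex_V V v) (del_vertex_E E v) x y = (k1, k, k)))"
    using \<open>finite V\<close> has_edge_type_doubleton[OF simple_graph_del_vertex[OF assms(1)] del_edge]
    by (intro sum.mono_neutral_cong_right) (auto dest: has_edge_type_del_vertex_notin)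
  also have "\<dots> = int a * of_bool ((a - 1, b, c) = (k1, k, k))
      + int b * of_bool ((a, b - 1, c) = (k1, k, k)) + int c * of_bool ((a, b, c - 1) = (k1, k, k))
      + (int (card V) - 2 - int a - int b - int c) * of_bool ((a, b, c) = (k1, k, k))"
    by (rule sum_edge_type_del_vertex[OF assms abc])
  also have "\<dots> = (int (card V) - 2 - int k1 - 2 * int k) * of_bool ((a, b, c) = (k1, k, k))
      + (int k1 + 1) * of_bool ((a, b, c) = (k1 + 1, k, k))
      + (int k + 1) * of_bool ((a, b, c) = (k1, k, k + 1) \<or> (a, b, c) = (k1, k + 1, k))"
    by (rule edge_type_count_identity)
  finally show ?thesis
    using has_edge_type_doubleton[OF assms] abc by simp
qed

theorem corollary17:
  fixes V :: "'a set" and E :: "'a \<Rightarrow> 'a \<Rightarrow> bool" and k1 k :: nat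
  assumes "simple_graph V E" and "connected_graph V E"
  shows "(\<Sum>v\<in>V. int (dav (del_vertex_V V v) (del_vertex_E E v) k1 k k))
    = (int (card V) - 2 - int k1 - 2 * int k) * int (dav V E k1 k k)
      + (int k1 + 1) * int (dav V E (k1 + 1) k k)
      + (int k + 1) * int (dav V E k1 k (k + 1))"
proof -
  have fin: "finite (edges E)"
    using finite_edges[OF assms(1)] .
  have "(\<Sum>v\<in>V. int (dav (del_vertex_V V v) (del_vertex_E E v) k1 k k))
      = (\<Sum>v\<in>V. \<Sum>e\<in>edges E.
           of_bool (has_edge_type (del_vertex_V V v) (del_vertex_E E v) (k1, k, k) e))"
    using dav_eq_sum_has_edge_type[OF simple_graph_del_vertex[OF assms(1)] fin
        edges_del_vertex_subset]
    by simp
  also have "\<dots> = (\<Sum>e\<in>edges E. \<Sum>v\<in>V.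
           of_bool (has_edge_type (del_vertex_V V v) (del_vertex_E E v) (k1, k, k) e))"
    by (rule sum.swap)
  also have "\<dots> = (\<Sum>e\<in>edges E.
        (int (card V) - 2 - int k1 - 2 * int k) * of_bool (has_edge_type V E (k1, k, k) e)
      + (int k1 + 1) * of_bool (has_edge_type V E (k1 + 1, k, k) e)
      + (int k + 1) * of_bool (has_edge_type V E (k1, k, k + 1) e))"
    using sum_has_edge_type_del_vertex[OF assms(1)]
    by (intro sum.cong refl) (auto simp: edges_def)
  finally show ?thesis
    unfolding dav_eq_sum_has_edge_type[OF assms(1) fin subset_refl] sum.distrib sum_distrib_left .
qed

end
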